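(* Let $p$ be an odd prime, $t,s$ positive integers, $r=p^t$, $q=r^s$, $T=q+1$, $\eta$ the quadratic multiplicative character of $\mathbb{F}_r$ (with $\eta(0)=0$), $D=\{x\in\mathbb{F}_{q^2}:\eta(\mathrm{Tr}_{q/r}(x^T))=-1\}$, $K=\#D$, and for $a\in\mathbb{F}_{q^2}$ let $\mathbf{c}_a=\frac{1}{\sqrt K}(\zeta_p^{\mathrm{Tr}_{q^2/p}(ax)})_{x\in D}$ with $\zeta_p=e^{2\pi i/p}$. Then $$I_{max}=\max_{a\neq a'\in\mathbb{F}_{q^2}}|\mathbf{c}_a\mathbf{c}_{a'}^H|\leq\frac{1}{K}\cdot\frac{r+1}{2r}\,q.$$
   Context: $\mathrm{Tr}_{q/r}$ is the trace from $\mathbb{F}_q$ to $\mathbb{F}_r$, $\mathrm{Tr}_{q^2/p}$ the absolute trace of $\mathbb{F}_{q^2}$; $\mathbf{c}^H$ is the conjugate transpose. *)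

theory Defs
  imports "HOL-Analysis.Analysis"
begin

text \<open>The ambient field F_{q^2} is a finite field type 'a. Subfields are
  F_m = {x. x ^ m = x} for m a power of the characteristic dividing appropriately.\<close>

definition rel_trace :: "nat \<Rightarrow> nat \<Rightarrow> 'a::field \<Rightarrow> 'a" where
  "rel_trace r s y = (\<Sum>i<s. y ^ (r ^ i))"

definition abs_trace :: "nat \<Rightarrow> nat \<Rightarrow> 'a::field \<Rightarrow> 'a" where
  "abs_trace p n x = (\<Sum>i<n. x ^ (p ^ i))"

definition prime_field_nat :: "nat \<Rightarrow> 'a::field \<Rightarrow> nat" where
  "prime_field_nat p z = (THE k. k < p \<and> of_nat k = z)"

definition quad_char :: "nat \<Rightarrow> 'a::field \<Rightarrow> int" where
  "quad_char r y = (if y = 0 then 0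
      else if (\<exists>z. z ^ r = z \<and> z ^ 2 = y) then 1 else -1)"

definition zeta_pow :: "nat \<Rightarrow> nat \<Rightarrow> complex" where
  "zeta_pow p k = exp (2 * pi * \<i> * of_nat k / of_nat p)"

end

theory Submission
  imports Defs "HOL-Number_Theory.Cong" "HOL-Computational_Algebra.Polynomial"
begin

text \<open>
  For \<open>a \<noteq> a'\<close> the correlation is \<open>S(b) / K\<close>, where \<open>b = a - a' \<noteq> 0\<close> and \<open>S(b)\<close> is the sum
  of \<open>\<psi>(b x)\<close> over \<open>D\<close>, \<open>\<psi>\<close> being the canonical additive character of \<open>F_{q^2}\<close>.
  Detecting the nonsquares of \<open>F_r\<close> by the additive characters \<open>\<chi>\<close> of \<open>F_r\<close> gives
  \<open>S(b) = (1/r) \<Sum>_c G(c) \<Sum>_x \<psi>(b x) \<chi>(-c Tr(x^(q+1)))\<close>, where for \<open>c \<noteq> 0\<close>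
  \<open>2 G(c) = 2 \<Sum>_{v nonsquare} \<chi>(c v) = -1 - \<eta>(c) g\<close> with the quadratic Gauss sum \<open>g\<close>,
  \<open>|g|^2 = r\<close>. Completing the norm \<open>x^(q+1)\<close>, which maps \<open>F_{q^2}^*\<close> onto \<open>F_q^*\<close> with fibres
  of size \<open>q + 1\<close>, the sum over \<open>x\<close> is \<open>-q \<chi>(u / c)\<close> for \<open>c \<noteq> 0\<close>, where
  \<open>u = Tr(b^(q+1))\<close>, and \<open>0\<close> for \<open>c = 0\<close>. Hence \<open>S(b) = -(q / 2r) (A + g B)\<close> with
  \<open>A = \<Sum>_c \<chi>(u / c)\<close> and \<open>B = \<Sum>_c \<eta>(c) \<chi>(u / c)\<close>: either \<open>u = 0\<close>, \<open>A = r - 1\<close>, \<open>B = 0\<close>,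
  or \<open>|A| = 1\<close>, \<open>|B| = |g|\<close>; in both cases \<open>|A| + |g| |B| \<le> r + 1\<close>.
\<close>

section \<open>Counting roots and fibres\<close>

lemma card_roots_sparse_poly_le:
  fixes c :: "nat \<Rightarrow> 'a::idom"
  assumes "finite E" "d \<in> E" "\<And>e. e \<in> E \<Longrightarrow> e \<le> d" "c d \<noteq> 0"
  shows "card {x. (\<Sum>e\<in>E. c e * x ^ e) = 0} \<le> d"
proof -
  define P where "P = (\<Sum>e\<in>E. monom (c e) e)"
  have coeff_P: "coeff P k = (if k \<in> E then c k else 0)" for k
    using assms(1) by (simp add: P_def coeff_sum coeff_monom)
  have "P \<noteq> 0"
    using coeff_P[of d] assms by auto
  moreover have "degree P \<le> d"
    by (rule degree_le) (auto simp: coeff_P dest: assms(3))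
  moreover have "poly P x = (\<Sum>e\<in>E. c e * x ^ e)" for x
    by (simp add: P_def poly_sum poly_monom)
  ultimately show ?thesis
    using card_poly_roots_bound[of P] by simp
qed

lemma card_roots_trace_poly_le:
  assumes "M > 1" "j > 0"
  shows "card {x::'a::idom. (\<Sum>i<j. x ^ (M ^ i)) = 0} \<le> M ^ (j - 1)"
proof -
  have "inj_on (\<lambda>i. M ^ i) {..<j}"
    using assms(1) by (auto simp: inj_on_def power_inject_exp)
  then have "(\<Sum>i<j. x ^ (M ^ i)) = (\<Sum>e\<in>(\<lambda>i. M ^ i) ` {..<j}. 1 * x ^ e)" for x :: 'a
    by (simp add: sum.reindex)
  moreover have "card {x::'a. (\<Sum>e\<in>(\<lambda>i. M ^ i) ` {..<j}. 1 * x ^ e) = 0} \<le> M ^ (j - 1)"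
    by (rule card_roots_sparse_poly_le) (use assms in \<open>auto intro!: power_increasing\<close>)
  ultimately show ?thesis
    by simp
qed

lemma card_roots_of_unity_le:
  assumes "M > 0"
  shows "card {x::'a::idom. x ^ M = 1} \<le> M"
proof -
  have "x ^ M = 1 \<longleftrightarrow> (\<Sum>e\<in>{0, M}. (if e = 0 then -1 else 1) * x ^ e) = 0" for x :: 'a
    using assms by (auto simp: algebra_simps)
  moreover have "card {x::'a. (\<Sum>e\<in>{0, M}. (if e = 0 then -1 else 1) * x ^ e) = 0} \<le> M"
    by (rule card_roots_sparse_poly_le) (use assms in auto)
  ultimately show ?thesis
    by simp
qed

lemma sum_comp_constant_fibres:
  assumes "finite A" "\<And>y. y \<in> f ` A \<Longrightarrow> card {x\<in>A. f x = y} = k"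
  shows "(\<Sum>x\<in>A. g (f x)) = of_nat k * (\<Sum>y\<in>f ` A. g y)"
proof -
  have "(\<Sum>x\<in>A. g (f x)) = (\<Sum>y\<in>f ` A. \<Sum>x\<in>{x\<in>A. f x = y}. g (f x))"
    by (rule sum.image_gen[OF assms(1)])
  also have "\<dots> = (\<Sum>y\<in>f ` A. of_nat k * g y)"
  proof (rule sum.cong[OF refl])
    fix y assume "y \<in> f ` A"
    have "(\<Sum>x\<in>{x\<in>A. f x = y}. g (f x)) = (\<Sum>x\<in>{x\<in>A. f x = y}. g y)"
      by (rule sum.cong) auto
    then show "(\<Sum>x\<in>{x\<in>A. f x = y}. g (f x)) = of_nat k * g y"
      using assms(2)[OF \<open>y \<in> f ` A\<close>] by simp
  qed
  finally show ?thesis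
    by (simp add: sum_distrib_left)
qed

lemma card_constant_fibres:
  assumes "finite A" "\<And>y. y \<in> f ` A \<Longrightarrow> card {x\<in>A. f x = y} = k"
  shows "card A = k * card (f ` A)"
  using sum_comp_constant_fibres[OF assms, of "\<lambda>_. 1::nat"] by simp

lemma card_additive_fibre:
  fixes f :: "'a::ab_group_add \<Rightarrow> 'b::ab_group_add"
  assumes f_diff: "\<And>x y. f (x - y) = f x - f y"
  shows "card {x. f x = f x0} = card {x. f x = 0}"
proof -
  have "{x. f x = f x0} = (\<lambda>z. x0 + z) ` {x. f x = 0}"
  proof (intro equalityI subsetI)
    fix x assume "x \<in> {x. f x = f x0}"
    then show "x \<in> (\<lambda>z. x0 + z) ` {x. f x = 0}"
      using f_diff[of x x0] by (intro image_eqI[of _ _ "x - x0"]) auto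
  next
    fix x assume "x \<in> (\<lambda>z. x0 + z) ` {x. f x = 0}"
    then obtain z where "x = x0 + z" "f z = 0"
      by auto
    then show "x \<in> {x. f x = f x0}"
      using f_diff[of x x0] by simp
  qed
  then show ?thesis
    by (simp add: card_image)
qed

lemma card_power_fibre:
  fixes x0 :: "'a::field"
  assumes "x0 \<noteq> 0"
  shows "card {x. x ^ k = x0 ^ k} = card {z. z ^ k = (1::'a)}"
proof -
  have "{x. x ^ k = x0 ^ k} = (\<lambda>z. x0 * z) ` {z. z ^ k = 1}"
  proof (intro equalityI subsetI)
    fix x assume "x \<in> {x. x ^ k = x0 ^ k}"
    then show "x \<in> (\<lambda>z. x0 * z) ` {z. z ^ k = 1}"
      using assms by (intro image_eqI[of _ _ "x / x0"]) (auto simp: power_divide)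
  qed (auto simp: power_mult_distrib)
  then show ?thesis
    using assms by (simp add: card_image inj_on_def)
qed

lemma le_le_mult_eq_imp_eq:
  fixes a b A B :: nat
  assumes "a \<le> A" "b \<le> B" "a * b = A * B" "A > 0" "B > 0"
  shows "a = A \<and> b = B"
proof -
  have "a = A"
  proof (rule ccontr)
    assume "a \<noteq> A"
    then have "a * B < A * B"
      using assms(1,5) by simp
    moreover have "a * b \<le> a * B"
      using assms(2) by simp
    ultimately show False
      using assms(3) by simp
  qed
  then show ?thesis
    using assms(3,4) by simp
qed

section \<open>Fixed points of Frobenius powers\<close>

text \<open>In a field of characteristic \<open>p\<close> and degree \<open>n\<close> over \<open>F_p\<close>, \<open>frob_fixed (p ^ k)\<close> is the
  subfield \<open>F_{p^k}\<close> for every \<open>k\<close> dividing \<open>n\<close>.\<close>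
definition frob_fixed :: "nat \<Rightarrow> 'a::field set" where
  "frob_fixed m = {x. x ^ m = x}"

lemma card_frob_fixed_le:
  assumes "M > 1"
  shows "card (frob_fixed M :: 'a::field set) \<le> M"
proof -
  have "x ^ M = x \<longleftrightarrow> (\<Sum>e\<in>{1, M}. (if e = 1 then -1 else 1) * x ^ e) = 0" for x :: 'a
    using assms by (auto simp: algebra_simps)
  moreover have "card {x::'a. (\<Sum>e\<in>{1, M}. (if e = 1 then -1 else 1) * x ^ e) = 0} \<le> M"
    by (rule card_roots_sparse_poly_le) (use assms in auto)
  ultimately show ?thesis
    by (simp add: frob_fixed_def)
qed

lemma frob_fixed_0: "m > 0 \<Longrightarrow> 0 \<in> frob_fixed m"
  by (simp add: frob_fixed_def)

lemma frob_fixed_1: "1 \<in> frob_fixed m"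
  by (simp add: frob_fixed_def)

lemma frob_fixed_mult: "a \<in> frob_fixed m \<Longrightarrow> b \<in> frob_fixed m \<Longrightarrow> a * b \<in> frob_fixed m"
  by (simp add: frob_fixed_def power_mult_distrib)

lemma frob_fixed_inverse: "a \<in> frob_fixed m \<Longrightarrow> inverse a \<in> frob_fixed m"
  by (simp add: frob_fixed_def power_inverse)

lemma frob_fixed_divide: "a \<in> frob_fixed m \<Longrightarrow> b \<in> frob_fixed m \<Longrightarrow> a / b \<in> frob_fixed m"
  by (simp add: frob_fixed_def power_divide)

lemma frob_fixed_power: "a \<in> frob_fixed m \<Longrightarrow> a ^ j \<in> frob_fixed m"
  by (simp add: frob_fixed_def flip: power_mult) (metis mult.commute power_mult)

lemma frob_fixed_power_iterate: "x \<in> frob_fixed m \<Longrightarrow> x \<in> frob_fixed (m ^ j)"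
  by (induction j) (simp_all add: frob_fixed_def power_mult mult.commute)

lemma power_card_finite_field:
  fixes x :: "'a::{field,finite}"
  shows "x ^ CARD('a) = x"
proof (cases "x = 0")
  case False
  let ?U = "UNIV - {0::'a}"
  have "(\<Prod>y\<in>?U. x * y) = (\<Prod>y\<in>?U. y)"
    by (rule prod.reindex_bij_witness[of _ "\<lambda>y. y / x" "\<lambda>y. x * y"]) (use False in auto)
  then have "x ^ card ?U = 1"
    by (simp add: prod.distrib)
  moreover have "CARD('a) = Suc (card ?U)"
    by (simp add: card_Diff_singleton Suc_diff_1 finite_UNIV_card_ge_0)
  ultimately show ?thesis
    by (simp only: power_Suc mult_1_right)
qed (simp add: zero_power finite_UNIV_card_ge_0)

lemma prime_CHAR_finite_field: "prime CHAR('a::{field,finite})"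
  by (simp add: finite_imp_CHAR_pos prime_CHAR_semidom)

lemma rel_trace_0: "m > 0 \<Longrightarrow> rel_trace m j 0 = 0"
  by (simp add: rel_trace_def power_0_left)

lemma rel_trace_mult_left:
  "c \<in> frob_fixed m \<Longrightarrow> rel_trace m j (c * y) = c * rel_trace m j y"
  using frob_fixed_power_iterate[of c m]
  by (simp add: rel_trace_def frob_fixed_def power_mult_distrib sum_distrib_left)

lemma abs_trace_eq_rel_trace: "abs_trace = rel_trace"
  by (simp add: fun_eq_iff abs_trace_def rel_trace_def)

locale finite_field_char =
  fixes p n :: nat and field_type :: "'a::{field,finite} itself"
  assumes CHAR_eq: "CHAR('a) = p" and CARD_eq: "CARD('a) = p ^ n"
begin

lemma prime_p: "prime p"
  using prime_CHAR_finite_field[where 'a = 'a] CHAR_eq by simp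

lemma p_gt_1: "p > 1"
  using prime_p prime_gt_1_nat by blast

lemma n_pos: "n > 0"
proof (rule ccontr)
  assume "\<not> n > 0"
  moreover have "card {0::'a, 1} \<le> CARD('a)"
    by (rule card_mono) auto
  ultimately show False
    using CARD_eq by simp
qed

lemma power_p_power_add: "(x + y) ^ (p ^ k) = x ^ (p ^ k) + y ^ (p ^ k)" for x y :: 'a
  using freshmans_dream'[OF prime_CHAR_finite_field[where 'a = 'a], of "p ^ k" k x y] CHAR_eq
  by simp

lemma power_p_power_sum: "sum f A ^ (p ^ k) = (\<Sum>i\<in>A. f i ^ (p ^ k))" for f :: "'b \<Rightarrow> 'a"
  using freshmans_dream_sum'[OF prime_CHAR_finite_field[where 'a = 'a], of "p ^ k" k f A] CHAR_eq
  by simp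

lemma power_p_power_minus: "(- x) ^ (p ^ k) = - (x ^ (p ^ k))" for x :: 'a
proof -
  have "x ^ (p ^ k) + (- x) ^ (p ^ k) = 0"
    using power_p_power_add[of x "- x" k] p_gt_1 by (simp add: power_0_left)
  then show ?thesis
    by (simp add: add_eq_0_iff)
qed

lemma power_p_power_diff: "(x - y) ^ (p ^ k) = x ^ (p ^ k) - y ^ (p ^ k)" for x y :: 'a
  using power_p_power_add[of x "- y" k] power_p_power_minus[of y k] by simp

lemma power_p_power_n: "x ^ (p ^ n) = x" for x :: 'a
  using power_card_finite_field[of x] CARD_eq by simp

lemma frob_fixed_p_power_n: "frob_fixed (p ^ n) = (UNIV :: 'a set)"
  by (simp add: frob_fixed_def power_p_power_n)

lemma frob_fixed_add:
  "a \<in> frob_fixed (p ^ k) \<Longrightarrow> b \<in> frob_fixed (p ^ k) \<Longrightarrow> a + b \<in> (frob_fixed (p ^ k) :: 'a set)"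
  by (simp add: frob_fixed_def power_p_power_add)

lemma frob_fixed_uminus: "a \<in> frob_fixed (p ^ k) \<Longrightarrow> - a \<in> (frob_fixed (p ^ k) :: 'a set)"
  by (simp add: frob_fixed_def power_p_power_minus)

lemma frob_fixed_diff:
  "a \<in> frob_fixed (p ^ k) \<Longrightarrow> b \<in> frob_fixed (p ^ k) \<Longrightarrow> a - b \<in> (frob_fixed (p ^ k) :: 'a set)"
  by (simp add: frob_fixed_def power_p_power_diff)

lemma frob_fixed_of_nat: "of_nat j \<in> (frob_fixed (p ^ k) :: 'a set)"
  using p_gt_1 by (induction j) (simp_all add: frob_fixed_add frob_fixed_0 frob_fixed_1)

lemma sum_powers_frob_diff_eq_0:
  assumes "(p ^ k) ^ j = p ^ n"
  shows "(\<Sum>i<j. (x ^ p ^ k - x) ^ ((p ^ k) ^ i)) = (0::'a)"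
proof -
  have "(\<Sum>i<j. (x ^ p ^ k - x) ^ ((p ^ k) ^ i)) = (\<Sum>i<j. x ^ ((p ^ k) ^ Suc i) - x ^ ((p ^ k) ^ i))"
    by (simp add: power_p_power_diff mult.commute flip: power_mult)
  also have "\<dots> = x ^ ((p ^ k) ^ j) - x ^ ((p ^ k) ^ 0)"
    by (rule sum_lessThan_telescope)
  finally show ?thesis
    using assms power_p_power_n by simp
qed

text \<open>The map \<open>x \<mapsto> x ^ M - x\<close> is additive with kernel \<open>frob_fixed M\<close>, and its image
  consists of roots of the trace polynomial, so \<open>p ^ n \<le> card (frob_fixed M) * M ^ (j - 1)\<close>.\<close>
lemma card_frob_fixed:
  assumes "k > 0" "k dvd n"
  shows "card (frob_fixed (p ^ k) :: 'a set) = p ^ k"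
proof -
  define M where "M = p ^ k"
  define j where "j = n div k"
  have "M > 1"
    unfolding M_def by (rule one_less_power[OF p_gt_1 assms(1)])
  have "j > 0"
    using assms n_pos by (auto simp: j_def elim!: dvdE)
  have "M ^ j = p ^ n"
    using assms(2) by (simp add: M_def j_def flip: power_mult)
  define f where "f x = x ^ M - x" for x :: 'a
  have f_diff: "f (x - y) = f x - f y" for x y
    by (simp add: f_def M_def power_p_power_diff)
  have "p ^ n = card {x. f x = 0} * card (range f)"
    using card_constant_fibres[of UNIV f "card {x. f x = 0}"] card_additive_fibre[OF f_diff]
    by (auto simp: CARD_eq)
  moreover have "range f \<subseteq> {y. (\<Sum>i<j. y ^ (M ^ i)) = 0}"
    using sum_powers_frob_diff_eq_0 \<open>M ^ j = p ^ n\<close> by (auto simp: f_def M_def)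
  then have "card (range f) \<le> M ^ (j - 1)"
    using card_roots_trace_poly_le[OF \<open>M > 1\<close> \<open>j > 0\<close>, where 'a = 'a]
    by (meson card_mono finite order_trans)
  moreover have "{x. f x = 0} = frob_fixed M"
    by (auto simp: f_def frob_fixed_def)
  moreover have "M ^ j = M * M ^ (j - 1)"
    using \<open>j > 0\<close> by (cases j) auto
  ultimately have "M * M ^ (j - 1) \<le> card (frob_fixed M :: 'a set) * M ^ (j - 1)"
    using \<open>M ^ j = p ^ n\<close> by (metis mult_le_mono2)
  then have "M \<le> card (frob_fixed M :: 'a set)"
    using \<open>M > 1\<close> by (simp add: mult_le_cancel2)
  then show ?thesis
    using card_frob_fixed_le[OF \<open>M > 1\<close>, where 'a = 'a] M_def by (metis antisym)
qed

lemma frob_fixed_p: "frob_fixed p = (of_nat ` {..<p} :: 'a set)"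
proof -
  have inj: "inj_on (of_nat :: nat \<Rightarrow> 'a) {..<p}"
    by (auto simp: inj_on_def of_nat_eq_iff_cong_CHAR CHAR_eq cong_def)
  have "of_nat ` {..<p} \<subseteq> (frob_fixed p :: 'a set)"
    using frob_fixed_of_nat[of _ 1] by auto
  moreover have "card (frob_fixed p :: 'a set) = card (of_nat ` {..<p} :: 'a set)"
    using card_frob_fixed[of 1] n_pos card_image[OF inj] by simp
  ultimately show ?thesis
    by (intro card_subset_eq[symmetric]) auto
qed

lemma prime_field_nat_of_nat: "prime_field_nat p (of_nat k :: 'a) = k mod p"
  unfolding prime_field_nat_def
  by (rule the_equality)
     (use p_gt_1 in \<open>auto simp: of_nat_eq_iff_cong_CHAR CHAR_eq cong_def\<close>)

lemma rel_trace_add: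
  "rel_trace (p ^ k) j (x + y) = rel_trace (p ^ k) j x + rel_trace (p ^ k) j (y :: 'a)"
  by (simp add: rel_trace_def power_p_power_add sum.distrib flip: power_mult)

lemma rel_trace_uminus: "rel_trace (p ^ k) j (- x) = - rel_trace (p ^ k) j (x :: 'a)"
  by (simp add: rel_trace_def power_p_power_minus sum_negf flip: power_mult)

lemma rel_trace_in_frob_fixed:
  assumes "y \<in> frob_fixed ((p ^ k) ^ j)"
  shows "rel_trace (p ^ k) j y \<in> (frob_fixed (p ^ k) :: 'a set)"
proof -
  define m where "m = p ^ k"
  have frob: "rel_trace m j y ^ m = (\<Sum>i<j. y ^ (m ^ Suc i))"
    by (simp add: rel_trace_def m_def power_p_power_sum power_Suc2 mult.commute flip: power_mult)
  have "rel_trace m j y ^ m + y ^ (m ^ 0) = (\<Sum>i<Suc j. y ^ (m ^ i))"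
    by (simp only: frob sum.lessThan_Suc_shift add.commute)
  also have "\<dots> = rel_trace m j y + y ^ (m ^ 0)"
    using assms by (simp add: rel_trace_def frob_fixed_def m_def)
  finally show ?thesis
    by (simp add: frob_fixed_def m_def)
qed

lemma rel_trace_trans:
  "rel_trace p a (rel_trace (p ^ a) b y) = rel_trace p (a * b) (y :: 'a)"
proof -
  have "rel_trace p a (rel_trace (p ^ a) b y) = (\<Sum>i<a. \<Sum>j<b. y ^ (p ^ (a * j + i)))"
    unfolding rel_trace_def
    by (simp add: power_p_power_sum power_add mult.commute flip: power_mult)
  also have "\<dots> = (\<Sum>j<b. \<Sum>i<a. y ^ (p ^ (a * j + i)))"
    by (rule sum.swap)
  also have "\<dots> = (\<Sum>j<b. \<Sum>k\<in>{j * a..<j * a + a}. y ^ (p ^ k))"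
  proof (rule sum.cong[OF refl])
    fix j
    have "(\<Sum>k\<in>{j * a..<j * a + a}. y ^ (p ^ k)) = (\<Sum>i\<in>{0..<a}. y ^ (p ^ (i + j * a)))"
      using sum.shift_bounds_nat_ivl[of "\<lambda>k. y ^ (p ^ k)" 0 "j * a" a] by (simp add: add.commute)
    then show "(\<Sum>i<a. y ^ (p ^ (a * j + i))) = (\<Sum>k\<in>{j * a..<j * a + a}. y ^ (p ^ k))"
      by (simp add: atLeast0LessThan mult.commute add.commute)
  qed
  also have "\<dots> = (\<Sum>k<b * a. y ^ (p ^ k))"
    by (rule sum.nat_group)
  finally show ?thesis
    by (simp add: rel_trace_def mult.commute)
qed

end

section \<open>Additive characters\<close>

lemma zeta_pow_eq_cis: "zeta_pow p k = cis (2 * pi * real k / real p)"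
  by (simp add: zeta_pow_def cis_conv_exp mult_ac)

lemma norm_zeta_pow: "norm (zeta_pow p k) = 1"
  by (simp add: zeta_pow_eq_cis)

lemma zeta_pow_eq_iff: "p > 0 \<Longrightarrow> zeta_pow p j = zeta_pow p k \<longleftrightarrow> j mod p = k mod p"
  using complex_root_unity_eq[of p j k] by (simp add: zeta_pow_def)

lemma zeta_pow_add: "zeta_pow p (i + j) = zeta_pow p i * zeta_pow p j"
  by (simp add: zeta_pow_eq_cis cis_mult add_divide_distrib algebra_simps)

lemma zeta_pow_mod: "p > 0 \<Longrightarrow> zeta_pow p (k mod p) = zeta_pow p k"
  by (simp add: zeta_pow_eq_iff)

lemma zeta_pow_eq_1_iff: "p > 0 \<Longrightarrow> zeta_pow p k = 1 \<longleftrightarrow> p dvd k"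
  using zeta_pow_eq_iff[of p k 0] by (simp add: zeta_pow_def dvd_eq_mod_eq_0)

context finite_field_char
begin

text \<open>\<open>e_p z = \<zeta>_p^z\<close> on the prime field \<open>frob_fixed p\<close>; off it, \<open>prime_field_nat\<close> is an
  unspecified \<open>THE\<close>-value.\<close>
definition e_p :: "'a \<Rightarrow> complex" where
  "e_p z = zeta_pow p (prime_field_nat p z)"

lemma e_p_of_nat: "e_p (of_nat k) = zeta_pow p k"
  using p_gt_1 by (simp add: e_p_def prime_field_nat_of_nat zeta_pow_mod)

lemma e_p_0: "e_p 0 = 1"
  using e_p_of_nat[of 0] by (simp add: zeta_pow_def)

lemma norm_e_p: "norm (e_p z) = 1"
  by (simp add: e_p_def norm_zeta_pow)

lemma e_p_add: "a \<in> frob_fixed p \<Longrightarrow> b \<in> frob_fixed p \<Longrightarrow> e_p (a + b) = e_p a * e_p b"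
  by (auto simp: frob_fixed_p e_p_of_nat zeta_pow_add simp flip: of_nat_add)

lemma cnj_e_p:
  assumes "a \<in> frob_fixed p"
  shows "cnj (e_p a) = e_p (- a)"
proof -
  have "e_p (- a) * e_p a = 1"
    using e_p_add[of "- a" a] frob_fixed_uminus[of a 1] assms by (simp add: e_p_0)
  moreover have "cnj (e_p a) * e_p a = 1"
    using complex_norm_square[of "e_p a"] by (simp add: norm_e_p mult.commute)
  moreover have "e_p a \<noteq> 0"
    using norm_e_p[of a] by auto
  ultimately show ?thesis
    by (metis mult_cancel_right)
qed

lemma e_p_eq_1_iff: "a \<in> frob_fixed p \<Longrightarrow> e_p a = 1 \<longleftrightarrow> a = 0"
  using p_gt_1
  by (auto simp: frob_fixed_p e_p_of_nat zeta_pow_eq_1_iff of_nat_eq_0_iff_char_dvd CHAR_eq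
           dest: dvd_imp_le)

definition tr_char :: "nat \<Rightarrow> 'a \<Rightarrow> complex" where
  "tr_char k y = e_p (rel_trace p k y)"

lemma rel_trace_in_prime_field: "(y :: 'a) \<in> frob_fixed (p ^ k) \<Longrightarrow> rel_trace p k y \<in> frob_fixed p"
  using rel_trace_in_frob_fixed[of y 1 k] by simp

lemma tr_char_0: "tr_char k 0 = 1"
  using p_gt_1 by (simp add: tr_char_def rel_trace_0 e_p_0)

lemma tr_char_add:
  "y \<in> frob_fixed (p ^ k) \<Longrightarrow> z \<in> frob_fixed (p ^ k) \<Longrightarrow> tr_char k (y + z) = tr_char k y * tr_char k z"
  using rel_trace_add[of 1 k y z]
  by (simp add: tr_char_def e_p_add rel_trace_in_prime_field)

lemma cnj_tr_char: "y \<in> frob_fixed (p ^ k) \<Longrightarrow> cnj (tr_char k y) = tr_char k (- y)"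
  using rel_trace_uminus[of 1 k y]
  by (simp add: tr_char_def cnj_e_p rel_trace_in_prime_field)

lemma sum_tr_char:
  assumes "k > 0" "k dvd n"
  shows "(\<Sum>y\<in>frob_fixed (p ^ k). tr_char k y) = 0"
proof -
  let ?F = "frob_fixed (p ^ k) :: 'a set"
  have "card {y::'a. rel_trace p k y = 0} \<le> p ^ (k - 1)"
    using card_roots_trace_poly_le[of p k, where 'a = 'a] p_gt_1 assms(1) by (simp add: rel_trace_def)
  moreover have "p ^ (k - 1) < p ^ k"
    using p_gt_1 assms(1) by (simp add: power_strict_increasing)
  ultimately have "card {y::'a. rel_trace p k y = 0} < card ?F"
    using card_frob_fixed[OF assms] by simp
  then obtain y0 where y0: "y0 \<in> ?F" "rel_trace p k y0 \<noteq> 0"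
    by (metis (mono_tags, lifting) card_mono finite mem_Collect_eq not_le subsetI)
  have "(\<Sum>y\<in>?F. tr_char k y) = (\<Sum>y\<in>?F. tr_char k (y + y0))"
    by (rule sum.reindex_bij_witness[of _ "\<lambda>y. y + y0" "\<lambda>y. y - y0"])
       (use y0 frob_fixed_add frob_fixed_diff in auto)
  also have "\<dots> = (\<Sum>y\<in>?F. tr_char k y) * tr_char k y0"
    using y0 by (simp add: tr_char_add sum_distrib_right)
  finally have "(\<Sum>y\<in>?F. tr_char k y) * (1 - tr_char k y0) = 0"
    by (simp add: algebra_simps)
  moreover have "tr_char k y0 \<noteq> 1"
    using y0 by (simp add: tr_char_def e_p_eq_1_iff rel_trace_in_prime_field)
  ultimately show ?thesis
    by simp
qed

lemma sum_tr_char_mult: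
  assumes "k > 0" "k dvd n" "c \<in> frob_fixed (p ^ k)"
  shows "(\<Sum>y\<in>frob_fixed (p ^ k). tr_char k (c * y)) = (if c = 0 then of_nat (p ^ k) else 0)"
proof (cases "c = 0")
  case True
  then show ?thesis
    using assms by (simp add: tr_char_0 card_frob_fixed)
next
  case False
  have "(\<Sum>y\<in>frob_fixed (p ^ k). tr_char k (c * y)) = (\<Sum>y\<in>frob_fixed (p ^ k). tr_char k y)"
    by (rule sum.reindex_bij_witness[of _ "\<lambda>y. y / c" "\<lambda>y. c * y"])
       (use assms False frob_fixed_mult frob_fixed_divide in auto)
  then show ?thesis
    using sum_tr_char[OF assms(1,2)] False by simp
qed

lemma sum_tr_char_mult_nonzero:
  assumes "k > 0" "k dvd n" "c \<in> frob_fixed (p ^ k)"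
  shows "(\<Sum>y\<in>frob_fixed (p ^ k) - {0}. tr_char k (c * y)) = (if c = 0 then of_nat (p ^ k) - 1 else -1)"
proof -
  let ?S = "\<Sum>y\<in>frob_fixed (p ^ k) - {0}. tr_char k (c * y)"
  have "(0::'a) \<in> frob_fixed (p ^ k)"
    using p_gt_1 by (simp add: frob_fixed_0)
  then have "(\<Sum>y\<in>frob_fixed (p ^ k). tr_char k (c * y)) = 1 + ?S"
    by (simp add: sum.remove[of _ 0] tr_char_0)
  then have "1 + ?S = (if c = 0 then of_nat (p ^ k) else 0)"
    using sum_tr_char_mult[OF assms] by simp
  then show ?thesis
    by (auto simp: eq_diff_eq add.commute add_eq_0_iff)
qed

end

section \<open>The quadratic character of \<open>F_r\<close>\<close>

locale quadratic_subfield = finite_field_char +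
  fixes t r :: nat
  assumes odd_p: "odd p" and t_pos: "t > 0" and t_dvd_n: "t dvd n" and r_eq: "r = p ^ t"
begin

abbreviation Fr :: "'a set" where
  "Fr \<equiv> frob_fixed r"

abbreviation Fr_units :: "'a set" where
  "Fr_units \<equiv> Fr - {0}"

lemma r_gt_1: "r > 1"
  using one_less_power[OF p_gt_1 t_pos] r_eq by simp

lemma card_Fr: "card Fr = r"
  using card_frob_fixed[OF t_pos t_dvd_n] r_eq by simp

lemmas Fr_uminus = frob_fixed_uminus[of _ t, folded r_eq]
lemmas Fr_diff = frob_fixed_diff[of _ t, folded r_eq]
lemmas tr_char_add_Fr = tr_char_add[of _ t, folded r_eq]
lemmas cnj_tr_char_Fr = cnj_tr_char[of _ t, folded r_eq]

lemma Fr_0: "0 \<in> Fr"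
  using r_gt_1 by (simp add: frob_fixed_0)

lemma Fr_1: "1 \<in> Fr"
  by (rule frob_fixed_1)

lemma Fr_units_mult: "a \<in> Fr_units \<Longrightarrow> b \<in> Fr_units \<Longrightarrow> a * b \<in> Fr_units"
  by (simp add: frob_fixed_mult)

lemma Fr_units_divide: "a \<in> Fr_units \<Longrightarrow> b \<in> Fr_units \<Longrightarrow> a / b \<in> Fr_units"
  by (simp add: frob_fixed_divide)

lemma card_Fr_units: "card Fr_units = r - 1"
  using card_Fr Fr_0 by (simp add: card_Diff_singleton)

lemma sum_tr_char_Fr:
  "w \<in> Fr \<Longrightarrow> (\<Sum>b\<in>Fr. tr_char t (w * b)) = (if w = 0 then of_nat r else 0)"
  using sum_tr_char_mult[OF t_pos t_dvd_n, of w] r_eq by simp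

lemma sum_tr_char_Fr_units:
  "w \<in> Fr \<Longrightarrow> (\<Sum>b\<in>Fr_units. tr_char t (w * b)) = (if w = 0 then of_nat r - 1 else -1)"
  using sum_tr_char_mult_nonzero[OF t_pos t_dvd_n, of w] r_eq by simp

lemma tr_char_mult_uminus:
  assumes "c \<in> Fr" "v \<in> Fr" "w \<in> Fr"
  shows "tr_char t (- (c * w)) * tr_char t (c * v) = tr_char t ((v - w) * c)"
proof -
  have "tr_char t ((v - w) * c) = tr_char t (c * v + - (c * w))"
    by (simp add: algebra_simps)
  also have "\<dots> = tr_char t (c * v) * tr_char t (- (c * w))"
    using assms by (intro tr_char_add_Fr) (simp_all add: frob_fixed_mult Fr_uminus)
  finally show ?thesis
    by (simp add: mult.commute)
qed

lemma two_neq_zero: "(2::'a) \<noteq> 0"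
proof
  assume "(2::'a) = 0"
  then have "p dvd 2"
    using of_nat_eq_0_iff_char_dvd[of 2, where 'a = 'a] CHAR_eq by simp
  then have "p = 2"
    using prime_p two_is_prime_nat primes_dvd_imp_eq by blast
  with odd_p show False
    by simp
qed

lemma one_neq_minus_one: "(1::'a) \<noteq> - 1"
  using two_neq_zero by (simp add: eq_neg_iff_add_eq_0)

definition nonzero_squares :: "'a set" where
  "nonzero_squares = (\<lambda>z. z ^ 2) ` Fr_units"

definition nonsquares :: "'a set" where
  "nonsquares = {v \<in> Fr. quad_char r v = -1}"

lemma nonzero_squares_subset: "nonzero_squares \<subseteq> Fr_units"
  using frob_fixed_power by (auto simp: nonzero_squares_def)

lemma quad_char_Fr_units:
  assumes "v \<in> Fr_units"
  shows "quad_char r v = (if v \<in> nonzero_squares then 1 else -1)"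
proof -
  have "(\<exists>z. z ^ r = z \<and> z ^ 2 = v) \<longleftrightarrow> v \<in> nonzero_squares"
    using assms by (auto simp: nonzero_squares_def frob_fixed_def)
  then show ?thesis
    using assms by (simp add: quad_char_def)
qed

lemma quad_char_nonzero_squares: "v \<in> nonzero_squares \<Longrightarrow> quad_char r v = 1"
  using nonzero_squares_subset quad_char_Fr_units[of v] by auto

lemma nonsquares_eq: "nonsquares = Fr_units - nonzero_squares"
proof (intro set_eqI iffI)
  fix v
  assume v: "v \<in> nonsquares"
  moreover have "quad_char r (0::'a) = 0"
    by (simp add: quad_char_def)
  ultimately have "v \<in> Fr_units"
    by (auto simp: nonsquares_def)
  then show "v \<in> Fr_units - nonzero_squares"
    using v quad_char_Fr_units[of v] by (auto simp: nonsquares_def)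
next
  fix v
  assume "v \<in> Fr_units - nonzero_squares"
  then show "v \<in> nonsquares"
    by (simp add: nonsquares_def quad_char_Fr_units)
qed

lemma sum_Fr_units_split:
  "(\<Sum>v\<in>Fr_units. g v) = (\<Sum>v\<in>nonzero_squares. g v) + (\<Sum>v\<in>nonsquares. g v)"
proof -
  have "Fr_units = nonzero_squares \<union> nonsquares" "nonzero_squares \<inter> nonsquares = {}"
    using nonzero_squares_subset by (auto simp: nonsquares_eq)
  then show ?thesis
    by (simp add: sum.union_disjoint)
qed

lemma card_nonzero_squares: "2 * card nonzero_squares = r - 1"
proof -
  have "card {z \<in> Fr_units. z ^ 2 = v} = 2" if "v \<in> (\<lambda>z. z ^ 2) ` Fr_units" for v
  proof -
    from that obtain z0 where z0: "z0 \<in> Fr_units" "v = z0 ^ 2"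
      by auto
    then have "{z \<in> Fr_units. z ^ 2 = v} = {z0, - z0}"
      using Fr_uminus[of z0] by (auto simp: power2_eq_iff)
    moreover have "z0 \<noteq> - z0"
      using z0 two_neq_zero by (auto simp: eq_neg_iff_add_eq_0 simp flip: mult_2)
    ultimately show ?thesis
      by simp
  qed
  then have "card Fr_units = 2 * card nonzero_squares"
    unfolding nonzero_squares_def by (intro card_constant_fibres) auto
  then show ?thesis
    using card_Fr_units by simp
qed

lemma power_r_minus_1: "z \<in> Fr_units \<Longrightarrow> z ^ (r - 1) = 1"
  using power_minus_mult[of r z] r_gt_1 by (simp add: frob_fixed_def)

text \<open>Euler's criterion: the \<open>(r - 1) / 2\<close> nonzero squares exhaust the roots of
  \<open>x ^ ((r - 1) / 2) = 1\<close>.\<close>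
lemma quad_char_eq_power:
  assumes a: "a \<in> Fr_units"
  shows "of_int (quad_char r a) = a ^ ((r - 1) div 2)"
proof -
  define h where "h = (r - 1) div 2"
  have h: "r - 1 = 2 * h"
    using odd_p r_eq by (simp add: h_def)
  have unit: "z ^ (2 * h) = 1" if "z \<in> Fr_units" for z
    using power_r_minus_1[OF that] h by metis
  have "nonzero_squares \<subseteq> {x. x ^ h = 1}"
    using unit by (auto simp: nonzero_squares_def simp flip: power_mult)
  moreover have "card {x::'a. x ^ h = 1} \<le> card nonzero_squares"
    using card_roots_of_unity_le[of h, where 'a = 'a] card_nonzero_squares r_gt_1 h by simp
  ultimately have squares_eq: "nonzero_squares = {x. x ^ h = 1}"
    by (metis card_mono card_subset_eq finite le_antisym)
  show ?thesis
  proof (cases "a \<in> nonzero_squares")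
    case True
    then show ?thesis
      using a squares_eq by (simp add: quad_char_Fr_units h_def)
  next
    case False
    have "(a ^ h) ^ 2 = 1"
      using unit[OF a] by (simp add: mult.commute flip: power_mult)
    then have "a ^ h = -1"
      using False squares_eq by (auto simp: power2_eq_1_iff)
    then show ?thesis
      using a False by (simp add: quad_char_Fr_units h_def)
  qed
qed

lemma quad_char_mult:
  assumes "a \<in> Fr_units" "b \<in> Fr_units"
  shows "quad_char r (a * b) = quad_char r a * quad_char r b"
proof -
  have "(of_int (quad_char r (a * b)) :: 'a) = (a * b) ^ ((r - 1) div 2)"
    by (rule quad_char_eq_power[OF Fr_units_mult[OF assms]])
  also have "\<dots> = of_int (quad_char r a) * of_int (quad_char r b)"
    using assms by (simp add: quad_char_eq_power power_mult_distrib)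
  finally have "(of_int (quad_char r (a * b)) :: 'a) = of_int (quad_char r a * quad_char r b)"
    by simp
  then show ?thesis
    using assms Fr_units_mult[OF assms] one_neq_minus_one one_neq_minus_one[symmetric]
    by (auto simp: quad_char_Fr_units split: if_splits)
qed

lemma quad_char_square:
  assumes "a \<in> Fr_units"
  shows "quad_char r a * quad_char r a = 1"
  using assms by (cases "a \<in> nonzero_squares") (simp_all add: quad_char_Fr_units)

lemma quad_char_divide:
  assumes "a \<in> Fr_units" "b \<in> Fr_units"
  shows "quad_char r (a / b) = quad_char r a * quad_char r b"
proof -
  have "quad_char r a = quad_char r (a / b) * quad_char r b"
    using quad_char_mult[OF Fr_units_divide[OF assms] assms(2)] assms by simp
  then show ?thesis
    using quad_char_square[OF assms(2)] by (simp add: algebra_simps)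
qed

lemma quad_char_1: "quad_char r (1::'a) = 1"
  by (auto simp: quad_char_def intro: exI[of _ 1])

lemma sum_quad_char: "(\<Sum>v\<in>Fr_units. (of_int (quad_char r v) :: complex)) = 0"
proof -
  have "(\<Sum>v\<in>nonzero_squares. (of_int (quad_char r v) :: complex)) = (\<Sum>v\<in>nonzero_squares. 1)"
    by (intro sum.cong) (simp_all add: quad_char_nonzero_squares)
  moreover have "(\<Sum>v\<in>nonsquares. (of_int (quad_char r v) :: complex)) = (\<Sum>v\<in>nonsquares. -1)"
    by (intro sum.cong) (auto simp: nonsquares_def)
  ultimately have "(\<Sum>v\<in>Fr_units. (of_int (quad_char r v) :: complex))
      = (\<Sum>v\<in>nonzero_squares. 1) + (\<Sum>v\<in>nonsquares. -1)"
    by (simp only: sum_Fr_units_split)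
  also have "\<dots> = 0"
    using card_nonzero_squares card_Fr_units nonzero_squares_subset
    by (simp add: nonsquares_eq card_Diff_subset)
  finally show ?thesis .
qed

definition gauss_sum :: complex where
  "gauss_sum = (\<Sum>v\<in>Fr_units. of_int (quad_char r v) * tr_char t v)"

lemma gauss_sum_mult:
  assumes c: "c \<in> Fr_units"
  shows "(\<Sum>v\<in>Fr_units. of_int (quad_char r v) * tr_char t (c * v)) = of_int (quad_char r c) * gauss_sum"
proof -
  have "(\<Sum>v\<in>Fr_units. of_int (quad_char r v) * tr_char t (c * v))
      = (\<Sum>w\<in>Fr_units. of_int (quad_char r c) * (of_int (quad_char r w) * tr_char t w))"
  proof (rule sum.reindex_bij_witness[of _ "\<lambda>w. w / c" "\<lambda>v. c * v"])
    fix v assume v: "v \<in> Fr_units"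
    have "quad_char r c * quad_char r (c * v) = quad_char r v"
      using c v quad_char_square[OF c] by (simp add: quad_char_mult mult.assoc[symmetric])
    then show "of_int (quad_char r c) * (of_int (quad_char r (c * v)) * tr_char t (c * v))
             = of_int (quad_char r v) * tr_char t (c * v)"
      by (simp flip: mult.assoc of_int_mult)
  qed (use c Fr_units_mult Fr_units_divide in auto)
  then show ?thesis
    by (simp add: gauss_sum_def sum_distrib_left)
qed

lemma cnj_gauss_sum: "cnj gauss_sum = (\<Sum>b\<in>Fr_units. of_int (quad_char r b) * tr_char t (- b))"
  unfolding gauss_sum_def cnj_sum by (intro sum.cong refl) (simp add: cnj_tr_char_Fr)

lemma gauss_sum_times_cnj: "gauss_sum * cnj gauss_sum = of_nat r"
proof -
  have "gauss_sum * cnj gauss_sum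
      = (\<Sum>b\<in>Fr_units. tr_char t (- b) * (of_int (quad_char r b) * gauss_sum))"
    by (simp add: cnj_gauss_sum sum_distrib_left mult_ac)
  also have "\<dots> = (\<Sum>b\<in>Fr_units. \<Sum>v\<in>Fr_units. of_int (quad_char r v) * tr_char t ((v - 1) * b))"
  proof (rule sum.cong[OF refl])
    fix b assume b: "b \<in> Fr_units"
    have shift: "tr_char t (- b) * tr_char t (b * v) = tr_char t ((v - 1) * b)" if "v \<in> Fr_units" for v
      using tr_char_mult_uminus[of b v 1] b that Fr_1 by simp
    have "tr_char t (- b) * (of_int (quad_char r b) * gauss_sum)
        = (\<Sum>v\<in>Fr_units. of_int (quad_char r v) * (tr_char t (- b) * tr_char t (b * v)))"
      by (simp add: gauss_sum_mult[OF b, symmetric] sum_distrib_left mult_ac)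
    also have "\<dots> = (\<Sum>v\<in>Fr_units. of_int (quad_char r v) * tr_char t ((v - 1) * b))"
      using shift by (intro sum.cong refl) simp
    finally show "tr_char t (- b) * (of_int (quad_char r b) * gauss_sum)
        = (\<Sum>v\<in>Fr_units. of_int (quad_char r v) * tr_char t ((v - 1) * b))" .
  qed
  also have "\<dots> = (\<Sum>v\<in>Fr_units. of_int (quad_char r v) * (\<Sum>b\<in>Fr_units. tr_char t ((v - 1) * b)))"
    by (subst sum.swap) (simp add: sum_distrib_left)
  also have "\<dots> = (\<Sum>v\<in>Fr_units. (if v = 1 then of_int (quad_char r v) * of_nat r else 0)
                                   - of_int (quad_char r v))"
    by (intro sum.cong refl) (subst sum_tr_char_Fr_units, auto simp: Fr_diff Fr_1 right_diff_distrib)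
  also have "\<dots> = (\<Sum>v\<in>Fr_units. if v = 1 then of_int (quad_char r v) * of_nat r else 0)
                 - (\<Sum>v\<in>Fr_units. of_int (quad_char r v))"
    by (rule sum_subtractf)
  also have "\<dots> = of_nat r"
    using Fr_1 by (simp add: sum.delta sum_quad_char quad_char_1)
  finally show ?thesis .
qed

lemma norm_gauss_sum_sq: "cmod gauss_sum ^ 2 = r"
proof -
  from complex_norm_square[of gauss_sum]
  have "complex_of_real (cmod gauss_sum ^ 2) = of_nat r"
    by (simp only: gauss_sum_times_cnj)
  then show ?thesis
    by (metis of_real_eq_iff of_real_of_nat_eq)
qed

lemma sum_nonsquares_tr_char:
  assumes c: "c \<in> Fr_units"
  shows "2 * (\<Sum>v\<in>nonsquares. tr_char t (c * v)) = - 1 - of_int (quad_char r c) * gauss_sum"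
proof -
  let ?Q = "\<Sum>v\<in>nonzero_squares. tr_char t (c * v)"
  let ?N = "\<Sum>v\<in>nonsquares. tr_char t (c * v)"
  have "?Q + ?N = (\<Sum>v\<in>Fr_units. tr_char t (c * v))"
    by (rule sum_Fr_units_split[symmetric])
  also have "\<dots> = - 1"
    using c by (simp add: sum_tr_char_Fr_units)
  finally have sum_QN: "?Q + ?N = - 1" .
  have "(\<Sum>v\<in>nonzero_squares. of_int (quad_char r v) * tr_char t (c * v)) = ?Q"
    by (intro sum.cong) (simp_all add: quad_char_nonzero_squares)
  moreover have "(\<Sum>v\<in>nonsquares. of_int (quad_char r v) * tr_char t (c * v)) = - ?N"
    unfolding sum_negf[symmetric] by (intro sum.cong) (simp_all add: nonsquares_def)
  ultimately have "?Q - ?N = (\<Sum>v\<in>Fr_units. of_int (quad_char r v) * tr_char t (c * v))"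
    by (simp only: sum_Fr_units_split diff_conv_add_uminus)
  also have "\<dots> = of_int (quad_char r c) * gauss_sum"
    by (rule gauss_sum_mult[OF c])
  finally have diff_QN: "?Q - ?N = of_int (quad_char r c) * gauss_sum" .
  have "2 * ?N = (?Q + ?N) - (?Q - ?N)"
    by (simp only: mult_2 diff_diff_eq2 add_diff_cancel_left' add.assoc)
  then show ?thesis
    by (simp only: sum_QN diff_QN)
qed

lemma sum_nonsquares_indicator:
  assumes w: "w \<in> Fr"
  shows "(\<Sum>c\<in>Fr. tr_char t (- (c * w)) * (\<Sum>v\<in>nonsquares. tr_char t (c * v)))
       = (if w \<in> nonsquares then of_nat r else 0)"
proof -
  have "(\<Sum>c\<in>Fr. tr_char t (- (c * w)) * (\<Sum>v\<in>nonsquares. tr_char t (c * v)))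
      = (\<Sum>c\<in>Fr. \<Sum>v\<in>nonsquares. tr_char t ((v - w) * c))"
  proof (rule sum.cong[OF refl])
    fix c assume "c \<in> Fr"
    then show "tr_char t (- (c * w)) * (\<Sum>v\<in>nonsquares. tr_char t (c * v))
             = (\<Sum>v\<in>nonsquares. tr_char t ((v - w) * c))"
      unfolding sum_distrib_left using w
      by (intro sum.cong refl) (simp add: nonsquares_def tr_char_mult_uminus)
  qed
  also have "\<dots> = (\<Sum>v\<in>nonsquares. \<Sum>c\<in>Fr. tr_char t ((v - w) * c))"
    by (rule sum.swap)
  also have "\<dots> = (\<Sum>v\<in>nonsquares. if w = v then of_nat r else 0)"
    using w by (intro sum.cong refl) (auto simp: nonsquares_def sum_tr_char_Fr Fr_diff)
  also have "\<dots> = (if w \<in> nonsquares then of_nat r else 0)"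
    by (simp add: sum.delta)
  finally show ?thesis .
qed

lemma sum_tr_char_divide:
  assumes u: "u \<in> Fr"
  shows "(\<Sum>c\<in>Fr_units. tr_char t (u / c)) = (if u = 0 then of_nat r - 1 else - 1)"
proof (cases "u = 0")
  case True
  then show ?thesis
    using card_Fr_units r_gt_1 by (simp add: tr_char_0 of_nat_diff)
next
  case False
  have "(\<Sum>c\<in>Fr_units. tr_char t (u / c)) = (\<Sum>d\<in>Fr_units. tr_char t (1 * d))"
    by (rule sum.reindex_bij_witness[of _ "\<lambda>d. u / d" "\<lambda>c. u / c"])
       (use u False Fr_units_divide in auto)
  then show ?thesis
    using sum_tr_char_Fr_units[OF Fr_1] False by simp
qed

lemma sum_tr_char_divide_quad_char:
  assumes u: "u \<in> Fr"
  shows "(\<Sum>c\<in>Fr_units. tr_char t (u / c) * of_int (quad_char r c))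
       = (if u = 0 then 0 else of_int (quad_char r u) * gauss_sum)"
proof (cases "u = 0")
  case True
  then show ?thesis
    using sum_quad_char by (simp add: tr_char_0)
next
  case False
  then have u': "u \<in> Fr_units"
    using u by simp
  have "(\<Sum>c\<in>Fr_units. tr_char t (u / c) * of_int (quad_char r c))
      = (\<Sum>d\<in>Fr_units. of_int (quad_char r u) * (of_int (quad_char r d) * tr_char t d))"
  proof (rule sum.reindex_bij_witness[of _ "\<lambda>d. u / d" "\<lambda>c. u / c"])
    fix c assume c: "c \<in> Fr_units"
    have "quad_char r u * quad_char r (u / c) = quad_char r c"
      using c u' quad_char_square[OF u'] by (simp add: quad_char_divide mult.assoc[symmetric])
    then have "of_int (quad_char r u) * (of_int (quad_char r (u / c)) * tr_char t (u / c))
        = of_int (quad_char r c) * tr_char t (u / c)"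
      by (simp flip: mult.assoc of_int_mult)
    then show "of_int (quad_char r u) * (of_int (quad_char r (u / c)) * tr_char t (u / c))
        = tr_char t (u / c) * of_int (quad_char r c)"
      by (simp only: mult.commute)
  qed (use u' Fr_units_divide in auto)
  then show ?thesis
    using False by (simp add: gauss_sum_def sum_distrib_left)
qed

lemma norm_sums_tr_char_divide_le:
  assumes u: "u \<in> Fr"
  shows "cmod (\<Sum>c\<in>Fr_units. tr_char t (u / c))
         + cmod gauss_sum * cmod (\<Sum>c\<in>Fr_units. tr_char t (u / c) * of_int (quad_char r c))
       \<le> 1 + real r"
    (is "cmod ?A + cmod gauss_sum * cmod ?B \<le> _")
proof (cases "u = 0")
  case True
  have "?A = of_nat r - 1"
    using sum_tr_char_divide[OF u] True by simp
  then have "?A = of_nat (r - 1)"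
    using r_gt_1 by (simp add: of_nat_diff)
  then have "cmod ?A = real (r - 1)"
    by (simp only: norm_of_nat)
  moreover have "?B = 0"
    using sum_tr_char_divide_quad_char[OF u] True by simp
  ultimately show ?thesis
    by simp
next
  case False
  have "?A = - 1"
    using sum_tr_char_divide[OF u] False by simp
  have "?B = of_int (quad_char r u) * gauss_sum"
    using sum_tr_char_divide_quad_char[OF u] False by simp
  moreover have "cmod (of_int (quad_char r u)) = 1"
    using False u quad_char_Fr_units[of u] by simp
  ultimately have "cmod ?B = cmod gauss_sum"
    by (simp add: norm_mult)
  then show ?thesis
    using \<open>?A = - 1\<close> norm_gauss_sum_sq by (simp add: power2_eq_square)
qed

lemma norm_sum_nonsquares_twisted_le:
  assumes u: "u \<in> Fr"
  shows "cmod (\<Sum>c\<in>Fr_units. tr_char t (u / c) * (\<Sum>v\<in>nonsquares. tr_char t (c * v)))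
       \<le> (real r + 1) / 2"
proof -
  define A where "A = (\<Sum>c\<in>Fr_units. tr_char t (u / c))"
  define B where "B = (\<Sum>c\<in>Fr_units. tr_char t (u / c) * of_int (quad_char r c))"
  define \<Sigma> where "\<Sigma> = (\<Sum>c\<in>Fr_units. tr_char t (u / c) * (\<Sum>v\<in>nonsquares. tr_char t (c * v)))"
  have "2 * \<Sigma> = (\<Sum>c\<in>Fr_units. tr_char t (u / c) * (2 * (\<Sum>v\<in>nonsquares. tr_char t (c * v))))"
    unfolding \<Sigma>_def by (subst sum_distrib_left) (simp add: mult.left_commute)
  also have "\<dots> = (\<Sum>c\<in>Fr_units. tr_char t (u / c) * (- 1 - of_int (quad_char r c) * gauss_sum))"
    by (intro sum.cong refl) (simp add: sum_nonsquares_tr_char)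
  also have "\<dots> = - A - gauss_sum * B"
    by (simp add: A_def B_def algebra_simps sum_subtractf sum_distrib_left sum_negf)
  finally have "2 * \<Sigma> = - A - gauss_sum * B" .
  have "2 * cmod \<Sigma> = cmod (2 * \<Sigma>)"
    by (simp add: norm_mult)
  also have "\<dots> = cmod (- A - gauss_sum * B)"
    by (simp only: \<open>2 * \<Sigma> = - A - gauss_sum * B\<close>)
  also have "\<dots> \<le> cmod A + cmod gauss_sum * cmod B"
    using norm_triangle_ineq4[of "- A" "gauss_sum * B"] by (simp add: norm_mult)
  also have "\<dots> \<le> 1 + real r"
    unfolding A_def B_def by (rule norm_sums_tr_char_divide_le[OF u])
  finally show ?thesis
    by (simp add: \<Sigma>_def)
qed

end

section \<open>Norm and trace of \<open>F_{q^2}\<close>\<close>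

locale hermitian_field = quadratic_subfield +
  fixes s q :: nat
  assumes s_pos: "s > 0" and q_eq: "q = r ^ s" and n_eq: "n = 2 * t * s"
begin

abbreviation Fq :: "'a set" where
  "Fq \<equiv> frob_fixed q"

lemma q_eq_p_power: "q = p ^ (t * s)"
  by (simp add: q_eq r_eq power_mult)

lemma q_gt_1: "q > 1"
  using one_less_power[OF r_gt_1 s_pos] q_eq by simp

lemma CARD_eq_q_sq: "CARD('a) = q ^ 2"
  by (simp add: CARD_eq q_eq_p_power n_eq flip: power_mult) (simp add: mult_ac)

lemma power_q_q: "(x::'a) ^ (q * q) = x"
  using power_card_finite_field[of x] CARD_eq_q_sq by (simp add: power2_eq_square)

lemma power_q_add: "((x::'a) + y) ^ q = x ^ q + y ^ q"
  using power_p_power_add[of x y "t * s"] q_eq_p_power by simp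

lemma card_Fq: "card Fq = q"
  using card_frob_fixed[of "t * s"] t_pos s_pos q_eq_p_power by (simp add: n_eq)

lemma Fq_0: "0 \<in> Fq"
  using q_gt_1 by (simp add: frob_fixed_0)

lemma Fr_subset_Fq: "Fr \<subseteq> Fq"
  using frob_fixed_power_iterate[of _ r s] q_eq by auto

lemma norm_in_Fq: "(x::'a) ^ (q + 1) \<in> Fq"
  using power_q_q[of x] by (simp add: frob_fixed_def power_mult_distrib mult.commute flip: power_mult)

lemma add_power_q_in_Fq: "(z::'a) + z ^ q \<in> Fq"
  by (simp add: frob_fixed_def power_q_add power_q_q add.commute flip: power_mult)

lemma rel_trace_in_Fr: "y \<in> Fq \<Longrightarrow> rel_trace r s y \<in> Fr"
  using rel_trace_in_frob_fixed[of y t s] by (simp add: r_eq q_eq)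

lemma rel_trace_r_uminus: "rel_trace r s (- y) = - rel_trace r s (y::'a)"
  using rel_trace_uminus[of t s y] by (simp add: r_eq)

lemma tr_char_rel_trace: "tr_char t (rel_trace r s y) = tr_char (t * s) y"
  using rel_trace_trans[of t s y] by (simp add: tr_char_def r_eq)

lemma tr_char_ts_add:
  "y \<in> Fq \<Longrightarrow> z \<in> Fq \<Longrightarrow> tr_char (t * s) (y + z) = tr_char (t * s) y * tr_char (t * s) z"
  using tr_char_add[of y "t * s" z] q_eq_p_power by simp

lemma tr_char_n_eq: "tr_char n (z::'a) = tr_char (t * s) (z + z ^ q)"
proof -
  have "rel_trace p n z = rel_trace p (t * s) (rel_trace (p ^ (t * s)) 2 z)"
    by (simp add: rel_trace_trans n_eq mult_ac)
  moreover have "rel_trace (p ^ (t * s)) 2 z = z + z ^ q"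
    by (simp add: rel_trace_def q_eq_p_power numeral_2_eq_2)
  ultimately show ?thesis
    by (simp add: tr_char_def)
qed

lemma tr_char_n_add: "tr_char n (a + b) = tr_char n a * tr_char n b"
  using tr_char_add[of a n b] frob_fixed_p_power_n by simp

lemma cnj_tr_char_n: "cnj (tr_char n a) = tr_char n (- a)"
  using cnj_tr_char[of a n] frob_fixed_p_power_n by simp

lemma tr_char_n_mult_cnj: "tr_char n (a * x) * cnj (tr_char n (a' * x)) = tr_char n ((a - a') * x)"
  by (simp add: cnj_tr_char_n left_diff_distrib flip: tr_char_n_add)

lemma sum_tr_char_n: "b \<noteq> 0 \<Longrightarrow> (\<Sum>x\<in>UNIV. tr_char n (b * x)) = 0"
  using sum_tr_char_mult[OF n_pos dvd_refl, of b] frob_fixed_p_power_n by simp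

lemma norm_fibres:
  shows "(\<lambda>x. x ^ (q + 1)) ` (UNIV - {0}) = Fq - {0}"
    and "y \<in> Fq - {0} \<Longrightarrow> card {x \<in> UNIV - {0}. x ^ (q + 1) = y} = q + 1"
proof -
  define U :: "'a set" where "U = UNIV - {0}"
  define Z :: "'a set" where "Z = {z. z ^ (q + 1) = 1}"
  have fibre: "card {x \<in> U. x ^ (q + 1) = y} = card Z" if "y \<in> (\<lambda>x. x ^ (q + 1)) ` U" for y
  proof -
    from that obtain x0 where "x0 \<in> U" "y = x0 ^ (q + 1)"
      by auto
    moreover have "{x \<in> U. x ^ (q + 1) = x0 ^ (q + 1)} = {x. x ^ (q + 1) = x0 ^ (q + 1)}"
      using \<open>x0 \<in> U\<close> by (auto simp: U_def)
    ultimately show ?thesis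
      using card_power_fibre[of x0 "q + 1"] by (simp add: U_def Z_def)
  qed
  have "card U = card Z * card ((\<lambda>x. x ^ (q + 1)) ` U)"
    by (rule card_constant_fibres) (use fibre in auto)
  moreover have "card U = (q + 1) * (q - 1)"
    using CARD_eq_q_sq q_gt_1 by (simp add: U_def card_Diff_singleton power2_eq_square algebra_simps)
  moreover have "card Z \<le> q + 1"
    unfolding Z_def by (rule card_roots_of_unity_le) simp
  moreover have image_subset: "(\<lambda>x. x ^ (q + 1)) ` U \<subseteq> Fq - {0}"
    using norm_in_Fq by (auto simp: U_def)
  then have "card ((\<lambda>x. x ^ (q + 1)) ` U) \<le> q - 1"
    using card_mono[OF finite image_subset] card_Fq Fq_0 by (simp add: card_Diff_singleton)
  \<comment> \<open>both bounds must be attained, since their product is \<open>card U\<close>\<close>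
  ultimately have "card Z = q + 1" "card ((\<lambda>x. x ^ (q + 1)) ` U) = q - 1"
    using le_le_mult_eq_imp_eq[of "card Z" "q + 1" "card ((\<lambda>x. x ^ (q + 1)) ` U)" "q - 1"] q_gt_1
    by auto
  then show image: "(\<lambda>x. x ^ (q + 1)) ` (UNIV - {0}) = Fq - {0}"
    using image_subset card_Fq Fq_0
    by (intro card_subset_eq) (auto simp: U_def card_Diff_singleton)
  show "card {x \<in> UNIV - {0}. x ^ (q + 1) = y} = q + 1" if "y \<in> Fq - {0}"
    using fibre[of y] that image \<open>card Z = q + 1\<close> by (simp add: U_def)
qed

lemma sum_tr_char_norm:
  assumes c: "c \<in> Fq - {0}"
  shows "(\<Sum>x\<in>UNIV. tr_char (t * s) (c * x ^ (q + 1))) = - of_nat q"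
proof -
  have "(\<Sum>x\<in>UNIV. tr_char (t * s) (c * x ^ (q + 1)))
      = 1 + (\<Sum>x\<in>UNIV - {0}. tr_char (t * s) (c * x ^ (q + 1)))"
    using q_gt_1 by (simp add: sum.remove[of _ 0] tr_char_0)
  also have "(\<Sum>x\<in>UNIV - {0}. tr_char (t * s) (c * x ^ (q + 1)))
      = of_nat (q + 1) * (\<Sum>y\<in>Fq - {0}. tr_char (t * s) (c * y))"
    using sum_comp_constant_fibres[of "UNIV - {0}" "\<lambda>x. x ^ (q + 1)" "q + 1" "\<lambda>y. tr_char (t * s) (c * y)"]
      norm_fibres by simp
  also have "(\<Sum>y\<in>Fq - {0}. tr_char (t * s) (c * y)) = - 1"
    using sum_tr_char_mult_nonzero[of "t * s" c] c t_pos s_pos q_eq_p_power by (simp add: n_eq)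
  finally show ?thesis
    by simp
qed

lemma norm_completing_square:
  assumes c: "c \<in> Fq - {0}"
  shows "b * x + (b * x) ^ q + c * x ^ (q + 1) = c * (x + b ^ q / c) ^ (q + 1) - b ^ (q + 1) / c"
proof -
  have cq: "c ^ q = c"
    using c by (simp add: frob_fixed_def)
  have "(b ^ q / c) ^ q = b / c"
    using power_q_q[of b] cq by (simp add: power_divide flip: power_mult)
  then have "(x + b ^ q / c) ^ (q + 1) = (x ^ q + b / c) * (x + b ^ q / c)"
    by (simp add: power_add power_q_add mult.commute)
  then show ?thesis
    using c by (simp add: field_simps power_add power_mult_distrib)
qed

lemma sum_tr_char_n_mult_norm:
  assumes c: "c \<in> Fq - {0}"
  shows "(\<Sum>x\<in>UNIV. tr_char n (b * x) * tr_char (t * s) (c * x ^ (q + 1)))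
       = - of_nat q * tr_char (t * s) (- (b ^ (q + 1) / c))"
proof -
  have cq: "c \<in> Fq"
    using c by simp
  have "- (b ^ (q + 1) / c) \<in> Fq"
    using frob_fixed_uminus[of _ "t * s"] frob_fixed_divide[OF norm_in_Fq cq] q_eq_p_power by simp
  then have completed: "tr_char n (b * x) * tr_char (t * s) (c * x ^ (q + 1))
      = tr_char (t * s) (c * (x + b ^ q / c) ^ (q + 1)) * tr_char (t * s) (- (b ^ (q + 1) / c))" for x
    using norm_completing_square[OF c, of b x] add_power_q_in_Fq[of "b * x"]
          frob_fixed_mult[OF cq norm_in_Fq, of x] frob_fixed_mult[OF cq norm_in_Fq, of "x + b ^ q / c"]
    by (simp add: tr_char_n_eq tr_char_ts_add[symmetric])
  have "(\<Sum>x\<in>UNIV. tr_char n (b * x) * tr_char (t * s) (c * x ^ (q + 1)))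
      = (\<Sum>x\<in>UNIV. tr_char (t * s) (c * (x + b ^ q / c) ^ (q + 1)))
        * tr_char (t * s) (- (b ^ (q + 1) / c))"
    unfolding sum_distrib_right by (intro sum.cong refl completed)
  also have "(\<Sum>x\<in>UNIV. tr_char (t * s) (c * (x + b ^ q / c) ^ (q + 1)))
      = (\<Sum>x\<in>UNIV. tr_char (t * s) (c * x ^ (q + 1)))"
    by (rule sum.reindex_bij_witness[of _ "\<lambda>x. x - b ^ q / c" "\<lambda>x. x + b ^ q / c"]) auto
  also have "\<dots> = - of_nat q"
    by (rule sum_tr_char_norm[OF c])
  finally show ?thesis .
qed

lemma sum_tr_char_n_mult_trace_norm:
  assumes b: "b \<noteq> 0" and c: "c \<in> Fr"
  shows "(\<Sum>x\<in>UNIV. tr_char n (b * x) * tr_char t (c * rel_trace r s (x ^ (q + 1))))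
       = (if c = 0 then 0 else - of_nat q * tr_char t (- rel_trace r s (b ^ (q + 1)) / c))"
proof (cases "c = 0")
  case True
  then show ?thesis
    using sum_tr_char_n[OF b] by (simp add: tr_char_0)
next
  case False
  then have cq: "c \<in> Fq - {0}"
    using c Fr_subset_Fq by auto
  have "tr_char t (c * rel_trace r s y) = tr_char (t * s) (c * y)" for y
  proof -
    have "tr_char t (c * rel_trace r s y) = tr_char t (rel_trace r s (c * y))"
      using rel_trace_mult_left[OF c] by simp
    then show ?thesis
      by (simp add: tr_char_rel_trace)
  qed
  moreover have "tr_char (t * s) (- (b ^ (q + 1) / c)) = tr_char t (- rel_trace r s (b ^ (q + 1)) / c)"
  proof -
    define y where "y = b ^ (q + 1)"
    have "- (y / c) = inverse c * (- y)"
      by (simp add: divide_inverse)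
    then have "rel_trace r s (- (y / c)) = - rel_trace r s y / c"
      using rel_trace_mult_left[OF frob_fixed_inverse[OF c]]
      by (simp add: rel_trace_r_uminus divide_inverse mult.commute)
    then show ?thesis
      by (simp add: y_def flip: tr_char_rel_trace)
  qed
  ultimately show ?thesis
    using sum_tr_char_n_mult_norm[OF cq, of b] False by simp
qed

end

section \<open>The correlation bound\<close>

context hermitian_field
begin

lemma sum_trace_norm_nonsquares_expand:
  "(\<Sum>x | rel_trace r s (x ^ (q + 1)) \<in> nonsquares. f x)
   = (\<Sum>c\<in>Fr. (\<Sum>x\<in>UNIV. f x * tr_char t ((- c) * rel_trace r s (x ^ (q + 1))))
                * ((\<Sum>v\<in>nonsquares. tr_char t (c * v)) / of_nat r))"
proof -
  define T where "T x = rel_trace r s (x ^ (q + 1))" for x :: 'a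
  define G where "G c = (\<Sum>v\<in>nonsquares. tr_char t (c * v))" for c
  have r0: "(of_nat r :: complex) \<noteq> 0"
    using r_gt_1 by simp
  have "(\<Sum>x | T x \<in> nonsquares. f x) = (\<Sum>x\<in>UNIV. if T x \<in> nonsquares then f x else 0)"
    using sum.inter_filter[of UNIV f "\<lambda>x. T x \<in> nonsquares"] by simp
  also have "\<dots> = (\<Sum>x\<in>UNIV. \<Sum>c\<in>Fr. f x * tr_char t ((- c) * T x) * (G c / of_nat r))"
  proof (rule sum.cong[OF refl])
    fix x
    have Tx: "T x \<in> Fr"
      unfolding T_def by (rule rel_trace_in_Fr[OF norm_in_Fq])
    have "(if T x \<in> nonsquares then f x else 0)
        = f x * (\<Sum>c\<in>Fr. tr_char t (- (c * T x)) * G c) / of_nat r"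
      using sum_nonsquares_indicator[OF Tx] r0 by (simp add: G_def)
    then show "(if T x \<in> nonsquares then f x else 0)
        = (\<Sum>c\<in>Fr. f x * tr_char t ((- c) * T x) * (G c / of_nat r))"
      by (simp add: sum_distrib_left sum_divide_distrib mult.assoc)
  qed
  also have "\<dots> = (\<Sum>c\<in>Fr. (\<Sum>x\<in>UNIV. f x * tr_char t ((- c) * T x)) * (G c / of_nat r))"
    by (subst sum.swap) (simp add: sum_distrib_right sum_divide_distrib)
  finally show ?thesis
    by (simp only: T_def G_def)
qed

lemma sum_trace_norm_nonsquares:
  assumes b: "b \<noteq> 0"
  shows "(\<Sum>x | rel_trace r s (x ^ (q + 1)) \<in> nonsquares. tr_char n (b * x))
       = - (of_nat q / of_nat r) * (\<Sum>c\<in>Fr_units. tr_char t (rel_trace r s (b ^ (q + 1)) / c)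
                                       * (\<Sum>v\<in>nonsquares. tr_char t (c * v)))"
proof -
  define u where "u = rel_trace r s (b ^ (q + 1))"
  define G where "G c = (\<Sum>v\<in>nonsquares. tr_char t (c * v))" for c
  have "(\<Sum>x | rel_trace r s (x ^ (q + 1)) \<in> nonsquares. tr_char n (b * x))
      = (\<Sum>c\<in>Fr. (\<Sum>x\<in>UNIV. tr_char n (b * x) * tr_char t ((- c) * rel_trace r s (x ^ (q + 1))))
                  * (G c / of_nat r))"
    unfolding G_def by (rule sum_trace_norm_nonsquares_expand)
  also have "\<dots> = (\<Sum>c\<in>Fr. (if c = 0 then 0 else - of_nat q * tr_char t (u / c)) * (G c / of_nat r))"
  proof (rule sum.cong[OF refl])
    fix c assume c: "c \<in> Fr"
    show "(\<Sum>x\<in>UNIV. tr_char n (b * x) * tr_char t ((- c) * rel_trace r s (x ^ (q + 1)))) * (G c / of_nat r)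
        = (if c = 0 then 0 else - of_nat q * tr_char t (u / c)) * (G c / of_nat r)"
      using sum_tr_char_n_mult_trace_norm[OF b Fr_uminus[OF c]] by (simp add: u_def)
  qed
  also have "\<dots> = (\<Sum>c\<in>Fr_units. - (of_nat q / of_nat r) * (tr_char t (u / c) * G c))"
    by (subst sum.mono_neutral_right[of Fr Fr_units]) (auto intro!: sum.cong)
  finally show ?thesis
    by (simp add: u_def G_def sum_distrib_left)
qed

lemma norm_sum_trace_norm_nonsquares_le:
  assumes "b \<noteq> 0"
  shows "cmod (\<Sum>x | rel_trace r s (x ^ (q + 1)) \<in> nonsquares. tr_char n (b * x))
       \<le> real q * ((real r + 1) / (2 * real r))"
proof -
  have u: "rel_trace r s (b ^ (q + 1)) \<in> Fr"
    by (rule rel_trace_in_Fr[OF norm_in_Fq])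
  have "cmod (\<Sum>x | rel_trace r s (x ^ (q + 1)) \<in> nonsquares. tr_char n (b * x))
      = real q / real r * cmod (\<Sum>c\<in>Fr_units. tr_char t (rel_trace r s (b ^ (q + 1)) / c)
                                              * (\<Sum>v\<in>nonsquares. tr_char t (c * v)))"
    unfolding sum_trace_norm_nonsquares[OF assms] by (simp add: norm_mult norm_divide)
  also have "\<dots> \<le> real q / real r * ((real r + 1) / 2)"
    by (rule mult_left_mono[OF norm_sum_nonsquares_twisted_le[OF u]]) simp
  also have "\<dots> = real q * ((real r + 1) / (2 * real r))"
    by simp
  finally show ?thesis .
qed

lemma norm_sum_tr_char_mult_cnj_le:
  assumes "a \<noteq> a'"
  shows "cmod (\<Sum>x | rel_trace r s (x ^ (q + 1)) \<in> nonsquares.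
                 tr_char n (a * x) * cnj (tr_char n (a' * x)))
       \<le> real q * ((real r + 1) / (2 * real r))"
  using norm_sum_trace_norm_nonsquares_le[of "a - a'"] assms by (simp add: tr_char_n_mult_cnj)

end

lemma norm_sum_scaled_mult_cnj:
  "cmod (\<Sum>x\<in>A. of_real \<kappa> * f x * cnj (of_real \<kappa> * g x)) = \<kappa>\<^sup>2 * cmod (\<Sum>x\<in>A. f x * cnj (g x))"
proof -
  have "(\<Sum>x\<in>A. of_real \<kappa> * f x * cnj (of_real \<kappa> * g x)) = of_real (\<kappa>\<^sup>2) * (\<Sum>x\<in>A. f x * cnj (g x))"
    by (simp add: sum_distrib_left power2_eq_square mult_ac)
  then show ?thesis
    by (simp add: norm_mult norm_power)
qed

theorem mainTheorem7:
  fixes p t s :: nat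
    and D :: "'a::{field,finite} set"
    and K r q :: nat
    and c :: "'a \<Rightarrow> 'a \<Rightarrow> complex"
  assumes "prime p" and "odd p"
    and "t > 0" and "s > 0"
    and "r = p ^ t" and "q = r ^ s"
    and "CHAR('a) = p" and "CARD('a) = q ^ 2"
    and "D = {x. quad_char r (rel_trace r s (x ^ (q + 1))) = -1}"
    and "K = card D"
    and "\<And>a x. c a x = (1 / sqrt (real K)) *
           zeta_pow p (prime_field_nat p (abs_trace p (2 * t * s) (a * x)))"
  shows "Max {cmod (\<Sum>x\<in>D. c a x * cnj (c a' x)) | a a'. a \<noteq> a'}
           \<le> (1 / real K) * ((real r + 1) / (2 * real r)) * real q"
proof -
  interpret hermitian_field p "2 * t * s" "TYPE('a)" t r s q
    by unfold_locales (use assms in \<open>simp_all add: mult_ac flip: power_mult\<close>)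
  have D_eq: "D = {x. rel_trace r s (x ^ (q + 1)) \<in> nonsquares}"
    using assms(9) rel_trace_in_Fr[OF norm_in_Fq] by (auto simp: nonsquares_def)
  have c_eq: "c a x = of_real (1 / sqrt (real K)) * tr_char (2 * t * s) (a * x)" for a x
    using assms(11) by (simp add: tr_char_def e_p_def abs_trace_eq_rel_trace)
  have "cmod (\<Sum>x\<in>D. c a x * cnj (c a' x)) \<le> (1 / real K) * ((real r + 1) / (2 * real r)) * real q"
    if "a \<noteq> a'" for a a'
  proof -
    have "1 / real K * cmod (\<Sum>x\<in>D. tr_char (2 * t * s) (a * x) * cnj (tr_char (2 * t * s) (a' * x)))
        \<le> 1 / real K * (real q * ((real r + 1) / (2 * real r)))"
      unfolding D_eq by (rule mult_left_mono[OF norm_sum_tr_char_mult_cnj_le[OF that]]) simp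
    then show ?thesis
      unfolding c_eq norm_sum_scaled_mult_cnj by (simp add: power_divide mult_ac)
  qed
  moreover have "finite {cmod (\<Sum>x\<in>D. c a x * cnj (c a' x)) | a a'. a \<noteq> a'}"
    using finite_image_set2[of "\<lambda>a. True" "\<lambda>a'. True" "\<lambda>a a'. cmod (\<Sum>x\<in>D. c a x * cnj (c a' x))"]
    by (rule finite_subset[rotated]) auto
  moreover have "(0::'a) \<noteq> 1"
    by simp
  ultimately show ?thesis
    by (subst Max_le_iff) blast+
qed

end
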